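(* Let $\mathrm{char}(K)=0$ and $k\ge2$ an integer. Then $\frac{d}{dx}\big(\mathrm{Exp}_k(x)\big)=\mathrm{Exp}_k(x)$; equivalently, writing $\mathrm{Exp}_k(x)=\sum_n f_n$ with $f_n$ homogeneous of degree $n$, one has $\frac{d}{dx}f_n=f_{n-1}$ for all $n\ge1$.
   Context: Let $K$ be a field and let $x\neq y$ be two symbols. A finite planar reduced rooted tree is a finite rooted tree in which the children of each vertex are linearly ordered and no vertex has exactly one child; its leaves are the vertices without children. $P(x,y)$ is the set of isomorphism classes of pairs $S=(T,\lambda)$, $T$ a finite planar reduced rooted tree, $\lambda:L(T)\to\{x,y\}$ a labeling of its leaves; $\deg_x(S)=\#\lambda^{-1}(x)$, $\deg(S)=\#L(T)$. $P'(x,y)=P(x,y)\cup\{1_P\}$ with $1_P$ the empty tree (degree $0$). For $m\ge2$, $\bullet_m(S_1,\dots,S_m)$ is the tree with a new root whose ordered children are the roots of $S_1,\dots,S_m$, labelings inherited; on $P'(x,y)$ occurrences of $1_P$ are deleted, with $\bullet_1(S)=S$, $\bullet_0()=1_P$. $K\{\{x,y\}$: all $f=\sum_{S\in P'(x,y)}c_S(f)S$ such that for each $n$ only finitely many $S$ with $\deg_x(S)=n$ have $c_S(f)\ne0$; products $f_1\cdot\ldots\cdot f_m=\bullet_m(f_1,\dots,f_m)$ with $c_S(f_1\cdot\ldots\cdot f_m)=\sum_{\bullet_m(S_1,\dots,S_m)=S}c_{S_1}(f_1)\cdots c_{S_m}(f_m)$; $x$-adic topology from $\mathrm{ord}_x(f)=\min\{\deg_x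 S:c_S(f)\ne0\}$. $K\{\{x\}\}$: series supported on $1_P$ and trees with all leaves labeled $x$. For $g,h\in K\{\{x,y\}$ with $\mathrm{ord}_x(g)\ge1$, $\varphi_{(g,h)}$ denotes the unique $x$-adically continuous $K$-linear map preserving $1_P$ and all $\bullet_m$ with $x\mapsto g$, $y\mapsto h$. The universal derivation $d:K\{\{x\}\}\to K\{\{x,y\}$ is the continuous $K$-linear map with $d(1_P)=0$ and, for a tree $S=(T,\lambda)$ with all leaves $l_1,\dots,l_m$ labeled $x$, $d(S)=\sum_{i=1}^m(T,\lambda^{(i)})$ with $\lambda^{(i)}$ labeling $l_i$ by $y$ and the other leaves by $x$. The derivative $\frac{d}{dx}:K\{\{x\}\}\to K\{\{x\}\}$ is $\psi\circ d$, where $\psi=\varphi_{(x,1_P)}$ (so $x\mapsto x$, $y\mapsto 1$); concretely, $\frac{d}{dx}S$ for a tree $S$ with $m$ leaves is the sum over its leaves of the tree obtained by deleting that leaf (via $\bullet$ with $1_P$ in that position). For $\mathrm{char}K=0$ and an integer $k\ge2$, the $k$-ary planar exponential series $\mathrm{Exp}_k(x)=\sum_{n\ge0}f_n\in K\{\{x\}\}$ ($f_n$ homogeneous of degree $n$, i.e. supported on trees with $n$ leaves) is the unique series with $f_0=1_P$, $f_1=x$ satisfying $k^nf_n=\sum_{i_1+\dots+i_k=n}f_{i_1}\cdot f_{i_2}\cdot\ldots\cdot f_{i_k}$ ($k$-ary products) for all $n$, i.e. $f(kx)=\bullet_k(f,\dots,f)$. *)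

theory Defs
  imports Main
begin

text \<open>Finite planar rooted trees; all leaves carry the label x (we only need K{{x}}).
  A tree is reduced if no vertex has exactly one child (and inner vertices have children).\<close>
datatype ptree = Lf | Nd "ptree list"

fun reduced :: "ptree \<Rightarrow> bool" where
  "reduced Lf = True"
| "reduced (Nd ts) = (2 \<le> length ts \<and> list_all reduced ts)"

fun nleaves :: "ptree \<Rightarrow> nat" where
  "nleaves Lf = 1"
| "nleaves (Nd ts) = sum_list (map nleaves ts)"

text \<open>Elements of P'(x): None is the empty tree 1_P, Some t a tree.\<close>
definition validP :: "ptree option \<Rightarrow> bool" where
  "validP S = (case S of None \<Rightarrow> True | Some t \<Rightarrow> reduced t)"

definition degP :: "ptree option \<Rightarrow> nat" where
  "degP S = (case S of None \<Rightarrow> 0 | Some t \<Rightarrow> nleaves t)"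

definition graft :: "ptree option list \<Rightarrow> ptree option" where
  "graft Ss = (let rs = [the S. S \<leftarrow> Ss, S \<noteq> None] in
     if rs = [] then None else if length rs = 1 then Some (hd rs) else Some (Nd rs))"

text \<open>Series: coefficient functions on P'(x).  Since there are only finitely many reduced
  trees with n leaves, any coefficient function supported on reduced trees is in K{{x}}.\<close>
type_synonym 'a series = "ptree option \<Rightarrow> 'a"

definition oneP :: "'a::zero_neq_one series" where
  "oneP = (\<lambda>S. if S = None then 1 else 0)"

definition xP :: "'a::zero_neq_one series" where
  "xP = (\<lambda>S. if S = Some Lf then 1 else 0)"

definition graft_series :: "'a::comm_semiring_1 series list \<Rightarrow> 'a series" where
  "graft_series fs S =
     (\<Sum>Ss\<in>{Ss. length Ss = length fs \<and> graft Ss = S}. \<Prod>i<length fs. (fs!i) (Ss!i))"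

text \<open>For a tree, the list (one entry per leaf, left to right) of the elements of P'(x)
  obtained by deleting that leaf (i.e. replacing it by 1_P via bullet).\<close>
function (sequential) del_leaf :: "ptree \<Rightarrow> ptree option list" where
  "del_leaf Lf = [None]"
| "del_leaf (Nd ts) =
     concat (map (\<lambda>(i, t). map (\<lambda>r. graft ((map Some ts)[i := r])) (del_leaf t))
                 (zip [0..<length ts] ts))"
  by pat_completeness auto
lemma size_in_list_le: "b \<in> set ts \<Longrightarrow> size b \<le> size_list size ts"
  by (induction ts) auto

termination
  by (relation "measure size") (auto dest!: set_zip_rightD simp: less_Suc_eq_le size_in_list_le)

text \<open>The derivative d/dx on K{{x}} (continuous linear extension of the tree-wise rule).\<close>
definition ddx :: "'a::comm_semiring_1 series \<Rightarrow> 'a series" where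
  "ddx g S' = (\<Sum>t\<in>{t. reduced t \<and> nleaves t = degP S' + 1}.
                 g (Some t) * of_nat (count_list (del_leaf t) S'))"

definition is_planar_Exp :: "nat \<Rightarrow> (nat \<Rightarrow> 'a::field_char_0 series) \<Rightarrow> bool" where
  "is_planar_Exp k f \<longleftrightarrow>
     f 0 = oneP \<and> f 1 = xP \<and>
     (\<forall>n S. f n S \<noteq> 0 \<longrightarrow> validP S \<and> degP S = n) \<and>
     (\<forall>n. (\<lambda>S. of_nat k ^ n * f n S) =
          (\<lambda>S. \<Sum>is\<in>{is. length is = k \<and> sum_list is = n}. graft_series (map f is) S))"

definition planar_Exp_comp :: "nat \<Rightarrow> nat \<Rightarrow> 'a::field_char_0 series" where
  "planar_Exp_comp k = (THE f. is_planar_Exp k f)"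

definition planar_Exp :: "nat \<Rightarrow> 'a::field_char_0 series" where
  "planar_Exp k = (\<lambda>S. planar_Exp_comp k (degP S) S)"

end

theory Submission
  imports Defs
begin

(* Deleting a leaf of a grafted tree S_1 ... S_m amounts to deleting a leaf of one S_j and
   regrafting, so d/dx obeys the Leibniz rule for the products f_1 ... f_m.  For the
   components f_n of Exp_k, the k compositions of n concentrated in a single part contribute
   k f_n to the functional equation, which therefore reads (k^n - k) f_n = sum of
   f_{c_1} ... f_{c_k} over the compositions c of n into k parts that are all smaller than n.
   Differentiating and applying induction to the parts lowers one positive part by one; over
   all compositions of n this produces every composition of n - 1 exactly k times, i.e.
   k^n f_{n-1}, and removing the concentrated terms again leaves (k^n - k) f_{n-1}.  As
   k^n <> k for n >= 2, this gives d f_n/dx = f_{n-1}.  Since planar_Exp_comp is defined by a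
   definite description, the components are first constructed by well-founded recursion and
   shown to be unique. *)

lemma length_le_sum_list_map:
  "(\<And>x. x \<in> set xs \<Longrightarrow> 1 \<le> f x) \<Longrightarrow> length xs \<le> sum_list (map f xs :: nat list)"
proof (induction xs)
  case (Cons a xs)
  then have "1 \<le> f a" and "length xs \<le> sum_list (map f xs)" by auto
  then show ?case by simp
qed simp

lemma of_nat_count_list_map:
  assumes "finite W" and "set L \<subseteq> W"
  shows "(of_nat (count_list (map h L) y) :: 'c::semiring_1) =
    (\<Sum>x\<in>W. of_nat (count_list L x) * (if h x = y then 1 else 0))"
  using assms(2)
proof (induction L)
  case (Cons a L)
  have point: "(of_nat (count_list (a # L) x) :: 'c) * (if h x = y then 1 else 0) =
      of_nat (count_list L x) * (if h x = y then 1 else 0) + (if x = a then (if h a = y then 1 else 0) else 0)"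
    for x
    by (cases "x = a") (simp_all add: distrib_right add.commute)
  have "(\<Sum>x\<in>W. (of_nat (count_list (a # L) x) :: 'c) * (if h x = y then 1 else 0)) =
      (\<Sum>x\<in>W. of_nat (count_list L x) * (if h x = y then 1 else 0)) +
      (\<Sum>x\<in>W. if x = a then (if h a = y then 1 else 0) else 0)"
    by (simp only: point sum.distrib)
  also have "(\<Sum>x\<in>W. if x = a then (if h a = y then 1 else 0) else 0) = (if h a = y then 1 else 0)"
    using Cons.prems assms(1) by (simp add: sum.delta)
  also have "(\<Sum>x\<in>W. of_nat (count_list L x) * (if h x = y then 1 else 0)) =
      (of_nat (count_list (map h L) y) :: 'c)"
    using Cons by simp
  finally show ?case by (simp add: add.commute)
qed simp

lemma sum_lists_update_swap:
  assumes "j < m"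
  shows "(\<Sum>(Ss, x)\<in>{Ss. length Ss = m \<and> set Ss \<subseteq> W} \<times> W. H (Ss[j := x]) (Ss ! j)) =
         (\<Sum>(Ss, x)\<in>{Ss. length Ss = m \<and> set Ss \<subseteq> W} \<times> W. H Ss x)"
  by (rule sum.reindex_bij_witness[where i = "\<lambda>(Ss, x). (Ss[j := x], Ss ! j)"
        and j = "\<lambda>(Ss, x). (Ss[j := x], Ss ! j)"])
    (use assms in \<open>auto dest: set_update_subset_insert[THEN subsetD]\<close>)

lemma list_all_update: "list_all P xs \<Longrightarrow> P x \<Longrightarrow> list_all P (xs[j := x])"
  by (auto simp: list_all_iff dest: set_update_subset_insert[THEN subsetD])

section \<open>Grafting and leaf deletion\<close>

lemma graft_eq: "graft Ss = (let rs = map the (filter (\<lambda>S. S \<noteq> None) Ss) in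
     if rs = [] then None else if length rs = 1 then Some (hd rs) else Some (Nd rs))"
proof -
  have "[the S. S \<leftarrow> Ss, S \<noteq> None] = map the (filter (\<lambda>S. S \<noteq> None) Ss)"
    by (induction Ss) auto
  then show ?thesis unfolding graft_def by simp
qed

lemma filter_not_None_eq: "filter (\<lambda>S. S \<noteq> None) Ss = map Some (map the (filter (\<lambda>S. S \<noteq> None) Ss))"
  by (induction Ss) auto

lemma graft_filter_not_None [simp]: "graft (filter (\<lambda>S. S \<noteq> None) Ss) = graft Ss"
  unfolding graft_eq by simp

lemma graft_map_Some: "graft (map Some ts) = (case ts of [] \<Rightarrow> None | [t] \<Rightarrow> Some t | _ \<Rightarrow> Some (Nd ts))"
  unfolding graft_eq by (simp add: comp_def split: list.split)

lemma graft_singleton [simp]: "graft [S] = S"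
  unfolding graft_eq by (cases S) auto

lemma graft_replicate_None_update: "j < k \<Longrightarrow> graft ((replicate k None)[j := S]) = S"
proof -
  assume "j < k"
  then have "(replicate k None)[j := S] = replicate j None @ S # replicate (k - j - 1) None"
    by (intro nth_equalityI) (auto simp: nth_append nth_list_update)
  then have "filter (\<lambda>S. S \<noteq> None) ((replicate k None)[j := S]) = filter (\<lambda>S. S \<noteq> None) [S]"
    by simp
  then show ?thesis by (metis graft_filter_not_None graft_singleton)
qed

lemma graft_cases:
  obtains ts where "filter (\<lambda>S. S \<noteq> None) Ss = map Some ts"
    and "\<And>t. Some t \<in> set Ss \<longleftrightarrow> t \<in> set ts"
    and "graft Ss = (case ts of [] \<Rightarrow> None | [t] \<Rightarrow> Some t | _ \<Rightarrow> Some (Nd ts))"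
proof -
  define ts where "ts = map the (filter (\<lambda>S. S \<noteq> None) Ss)"
  have ts: "filter (\<lambda>S. S \<noteq> None) Ss = map Some ts"
    unfolding ts_def by (rule filter_not_None_eq)
  have "Some t \<in> set Ss \<longleftrightarrow> t \<in> set ts" for t
  proof -
    have "Some t \<in> set Ss \<longleftrightarrow> Some t \<in> set (filter (\<lambda>S. S \<noteq> None) Ss)" by simp
    then show ?thesis unfolding ts by auto
  qed
  moreover have "graft Ss = (case ts of [] \<Rightarrow> None | [t] \<Rightarrow> Some t | _ \<Rightarrow> Some (Nd ts))"
    by (metis ts graft_filter_not_None graft_map_Some)
  ultimately show thesis using ts that by blast
qed

lemma degP_graft: "degP (graft Ss) = sum_list (map degP Ss)"
proof -
  obtain ts where ts: "filter (\<lambda>S. S \<noteq> None) Ss = map Some ts"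
    and "\<And>t. Some t \<in> set Ss \<longleftrightarrow> t \<in> set ts"
    and g: "graft Ss = (case ts of [] \<Rightarrow> None | [t] \<Rightarrow> Some t | _ \<Rightarrow> Some (Nd ts))"
    using graft_cases[of Ss] by blast
  have "sum_list (map degP Ss) = sum_list (map degP (filter (\<lambda>S. S \<noteq> None) Ss))"
    by (rule sum_list_map_filter[symmetric]) (simp add: degP_def)
  also have "\<dots> = sum_list (map nleaves ts)" unfolding ts by (simp add: degP_def comp_def)
  finally show ?thesis using g by (simp add: degP_def split: list.split)
qed

lemma validP_graft: "(\<And>S. S \<in> set Ss \<Longrightarrow> validP S) \<Longrightarrow> validP (graft Ss)"
proof -
  assume valid: "\<And>S. S \<in> set Ss \<Longrightarrow> validP S"
  obtain ts where "filter (\<lambda>S. S \<noteq> None) Ss = map Some ts"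
    and mem: "\<And>t. Some t \<in> set Ss \<longleftrightarrow> t \<in> set ts"
    and g: "graft Ss = (case ts of [] \<Rightarrow> None | [t] \<Rightarrow> Some t | _ \<Rightarrow> Some (Nd ts))"
    using graft_cases[of Ss] by blast
  have "list_all reduced ts" using valid mem by (fastforce simp: list_all_iff validP_def)
  then show ?thesis using g by (auto simp: validP_def split: list.split)
qed

lemma graft_Some_mem:
  assumes "graft Ss = S" and "Some u \<in> set Ss"
  shows "S = Some u \<or> (\<exists>ts. S = Some (Nd ts) \<and> u \<in> set ts)"
proof -
  obtain ts where "filter (\<lambda>S. S \<noteq> None) Ss = map Some ts"
    and mem: "\<And>t. Some t \<in> set Ss \<longleftrightarrow> t \<in> set ts"
    and g: "graft Ss = (case ts of [] \<Rightarrow> None | [t] \<Rightarrow> Some t | _ \<Rightarrow> Some (Nd ts))"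
    using graft_cases[of Ss] by blast
  have "u \<in> set ts" using assms(2) mem by blast
  then show ?thesis using g assms(1) by (auto split: list.splits)
qed

fun del_leafP :: "ptree option \<Rightarrow> ptree option list" where
  "del_leafP None = []"
| "del_leafP (Some t) = del_leaf t"

definition del_leaf_forest :: "(ptree option list \<Rightarrow> 'b) \<Rightarrow> ptree option list \<Rightarrow> 'b list" where
  "del_leaf_forest H Ss =
     concat (map (\<lambda>j. map (\<lambda>r. H (Ss[j := r])) (del_leafP (Ss ! j))) [0..<length Ss])"

lemma del_leaf_forest_Nil [simp]: "del_leaf_forest H [] = []"
  by (simp add: del_leaf_forest_def)

lemma del_leaf_forest_Cons:
  "del_leaf_forest H (S # Ss) =
     map (\<lambda>r. H (r # Ss)) (del_leafP S) @ del_leaf_forest (\<lambda>X. H (S # X)) Ss"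
proof -
  have "[0..<length (S # Ss)] = 0 # map Suc [0..<length Ss]"
    by (simp add: upt_conv_Cons map_Suc_upt del: upt_Suc)
  then show ?thesis unfolding del_leaf_forest_def by (simp add: comp_def)
qed

lemma set_del_leaf_forest:
  "r \<in> set (del_leaf_forest H Ss) \<longleftrightarrow>
     (\<exists>j<length Ss. \<exists>r'\<in>set (del_leafP (Ss ! j)). r = H (Ss[j := r']))"
  by (auto simp: del_leaf_forest_def)

lemma count_list_del_leaf_forest:
  "count_list (del_leaf_forest H Ss) y =
     (\<Sum>j<length Ss. count_list (map (\<lambda>r. H (Ss[j := r])) (del_leafP (Ss ! j))) y)"
  by (simp add: del_leaf_forest_def count_list_concat sum_list_sum_nth atLeast0LessThan)

lemma del_leaf_Nd [simp]: "del_leaf (Nd ts) = del_leaf_forest graft (map Some ts)"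
proof -
  have "zip [0..<length ts] ts = map (\<lambda>i. (i, ts ! i)) [0..<length ts]"
    by (rule nth_equalityI) auto
  then show ?thesis
    by (simp add: del_leaf_forest_def) (intro arg_cong[where f = concat] map_cong, auto)
qed

declare del_leaf.simps(2) [simp del]

lemma set_del_leaf_Nd:
  "r \<in> set (del_leaf (Nd ts)) \<longleftrightarrow>
     (\<exists>j<length ts. \<exists>r'\<in>set (del_leaf (ts ! j)). r = graft ((map Some ts)[j := r']))"
  by (simp add: set_del_leaf_forest cong: conj_cong)

lemma del_leaf_forest_filter_not_None:
  assumes "\<And>X. H (filter (\<lambda>S. S \<noteq> None) X) = H X"
  shows "del_leaf_forest H (filter (\<lambda>S. S \<noteq> None) Ss) = del_leaf_forest H Ss"
  using assms
proof (induction Ss arbitrary: H)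
  case Nil
  then show ?case by simp
next
  case (Cons S Ss)
  show ?case
  proof (cases S)
    case None
    have "H (None # X) = H X" for X
      using Cons.prems[of "None # X"] Cons.prems[of X] by simp
    then have "(\<lambda>X. H (None # X)) = H" by blast
    moreover have "del_leaf_forest H (filter (\<lambda>S. S \<noteq> None) Ss) = del_leaf_forest H Ss"
      by (rule Cons.IH) (rule Cons.prems)
    ultimately show ?thesis using None by (simp add: del_leaf_forest_Cons)
  next
    case (Some t)
    have "H (r # filter (\<lambda>S. S \<noteq> None) Ss) = H (r # Ss)" for r
    proof -
      have "H (r # filter (\<lambda>S. S \<noteq> None) Ss) = H (filter (\<lambda>S. S \<noteq> None) (r # filter (\<lambda>S. S \<noteq> None) Ss))"
        by (rule Cons.prems[symmetric])
      also have "\<dots> = H (filter (\<lambda>S. S \<noteq> None) (r # Ss))" by simp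
      finally show ?thesis by (simp only: Cons.prems)
    qed
    moreover have "del_leaf_forest (\<lambda>X. H (Some t # X)) (filter (\<lambda>S. S \<noteq> None) Ss) =
        del_leaf_forest (\<lambda>X. H (Some t # X)) Ss"
    proof (rule Cons.IH)
      show "H (Some t # filter (\<lambda>S. S \<noteq> None) X) = H (Some t # X)" for X
        using Cons.prems[of "Some t # X"] by simp
    qed
    ultimately show ?thesis using Some by (simp add: del_leaf_forest_Cons)
  qed
qed

theorem del_leafP_graft: "del_leafP (graft Ss) = del_leaf_forest graft Ss"
proof -
  obtain ts where ts: "filter (\<lambda>S. S \<noteq> None) Ss = map Some ts"
    and "\<And>t. Some t \<in> set Ss \<longleftrightarrow> t \<in> set ts"
    and g: "graft Ss = (case ts of [] \<Rightarrow> None | [t] \<Rightarrow> Some t | _ \<Rightarrow> Some (Nd ts))"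
    using graft_cases[of Ss] by blast
  have "del_leaf_forest graft Ss = del_leaf_forest graft (map Some ts)"
    using del_leaf_forest_filter_not_None[of graft Ss, OF graft_filter_not_None] ts by simp
  then show ?thesis using g
    by (auto simp: del_leaf_forest_Cons split: list.split)
qed

lemma degP_del_leaf: "r \<in> set (del_leaf t) \<Longrightarrow> degP r + 1 = nleaves t"
proof (induction t arbitrary: r)
  case Lf
  then show ?case by (simp add: degP_def)
next
  case (Nd ts)
  from Nd.prems obtain j r' where j: "j < length ts" and r': "r' \<in> set (del_leaf (ts ! j))"
    and r: "r = graft ((map Some ts)[j := r'])"
    unfolding set_del_leaf_Nd by blast
  have "degP r' + 1 = nleaves (ts ! j)" using j r' by (intro Nd.IH) simp_all
  moreover have "map degP (map Some ts) = map nleaves ts" by (simp add: degP_def comp_def)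
  then have "degP r = sum_list ((map nleaves ts)[j := degP r'])"
    unfolding r degP_graft map_update by (rule arg_cong)
  moreover have "nleaves (ts ! j) \<le> sum_list (map nleaves ts)"
    using j by (intro member_le_sum_list) auto
  ultimately show ?case using j by (simp add: sum_list_update)
qed

lemma validP_del_leaf: "reduced t \<Longrightarrow> r \<in> set (del_leaf t) \<Longrightarrow> validP r"
proof (induction t arbitrary: r)
  case Lf
  then show ?case by (simp add: validP_def)
next
  case (Nd ts)
  from Nd.prems(2) obtain j r' where j: "j < length ts" and r': "r' \<in> set (del_leaf (ts ! j))"
    and r: "r = graft ((map Some ts)[j := r'])"
    unfolding set_del_leaf_Nd by blast
  have "validP r'" using j r' Nd.prems(1) by (intro Nd.IH) (simp_all add: list_all_iff)
  moreover have "validP (Some t)" if "t \<in> set ts" for t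
    using that Nd.prems(1) by (simp add: validP_def list_all_iff)
  moreover have "S = r' \<or> S \<in> Some ` set ts" if "S \<in> set ((map Some ts)[j := r'])" for S
    using that set_update_subset_insert[of "map Some ts" j r'] by auto
  ultimately have "validP S" if "S \<in> set ((map Some ts)[j := r'])" for S
    using that by blast
  then show ?case unfolding r by (rule validP_graft)
qed

lemma nleaves_pos: "reduced t \<Longrightarrow> 1 \<le> nleaves t"
proof (induction t)
  case (Nd ts)
  then have "length ts \<le> sum_list (map nleaves ts)"
    by (intro length_le_sum_list_map) (simp add: list_all_iff)
  then show ?case using Nd.prems by simp
qed simp

lemma length_le_nleaves: "reduced (Nd ts) \<Longrightarrow> length ts \<le> nleaves (Nd ts)"
  using nleaves_pos by (simp add: length_le_sum_list_map list_all_iff)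

lemma nleaves_child_less: "reduced (Nd ts) \<Longrightarrow> u \<in> set ts \<Longrightarrow> nleaves u < nleaves (Nd ts)"
proof -
  assume red: "reduced (Nd ts)" and u: "u \<in> set ts"
  have "2 \<le> length ts" using red by simp
  then have "1 \<le> length (remove1 u ts)" using u by (simp add: length_remove1)
  also have "\<dots> \<le> sum_list (map nleaves (remove1 u ts))"
    using red nleaves_pos by (intro length_le_sum_list_map) (auto simp: list_all_iff dest: set_remove1_subset[THEN subsetD])
  finally show ?thesis using sum_list_map_remove1[OF u, of nleaves] by simp
qed

lemma finite_reduced_upto: "finite {t. reduced t \<and> nleaves t \<le> N}"
proof (induction N)
  case 0
  have "{t. reduced t \<and> nleaves t \<le> 0} = {}" using nleaves_pos by fastforce
  then show ?case by (simp only: finite.emptyI)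
next
  case (Suc N)
  let ?F = "{ts. set ts \<subseteq> {t. reduced t \<and> nleaves t \<le> N} \<and> length ts \<le> Suc N}"
  have "{t. reduced t \<and> nleaves t \<le> Suc N} \<subseteq> insert Lf (Nd ` ?F)"
  proof
    fix t assume t: "t \<in> {t. reduced t \<and> nleaves t \<le> Suc N}"
    show "t \<in> insert Lf (Nd ` ?F)"
    proof (cases t)
      case (Nd ts)
      have "length ts \<le> Suc N" using t Nd length_le_nleaves by fastforce
      moreover have "set ts \<subseteq> {t. reduced t \<and> nleaves t \<le> N}"
        using t Nd nleaves_child_less by (fastforce simp: list_all_iff)
      ultimately show ?thesis using Nd by blast
    qed simp
  qed
  moreover have "finite (insert Lf (Nd ` ?F))" using Suc finite_lists_length_le by blast
  ultimately show ?case by (rule finite_subset)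
qed

definition elems_upto :: "nat \<Rightarrow> ptree option set" where
  "elems_upto N = {S. validP S \<and> degP S \<le> N}"

lemma finite_elems_upto: "finite (elems_upto N)"
proof -
  have "S \<in> insert None (Some ` {t. reduced t \<and> nleaves t \<le> N})" if "S \<in> elems_upto N" for S
    using that by (cases S) (auto simp: elems_upto_def validP_def degP_def)
  then have "elems_upto N \<subseteq> insert None (Some ` {t. reduced t \<and> nleaves t \<le> N})" by blast
  then show ?thesis using finite_reduced_upto finite_subset by blast
qed

lemma finite_lists_elems_upto: "finite {Ss. length Ss = m \<and> set Ss \<subseteq> elems_upto N}"
  using finite_lists_length_eq[OF finite_elems_upto, of N m] by (simp add: conj_commute)

lemma del_leafP_elems_upto: "S \<in> elems_upto N \<Longrightarrow> set (del_leafP S) \<subseteq> elems_upto N"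
  by (cases S) (auto simp: elems_upto_def validP_def degP_def dest: validP_del_leaf degP_del_leaf)

lemma count_del_leafP_eq_0: "degP S \<noteq> degP S' + 1 \<Longrightarrow> count_list (del_leafP S) S' = 0"
  by (cases S) (auto simp: count_list_0_iff degP_def dest: degP_del_leaf)

lemma finite_graft_preimage: "finite {Ss. length Ss = m \<and> graft Ss = S}"
proof -
  define A where "A = insert None (insert S (Some ` (case S of Some (Nd ts) \<Rightarrow> set ts | _ \<Rightarrow> {})))"
  have "finite A" unfolding A_def by (simp split: option.split ptree.split)
  moreover have "set Ss \<subseteq> A" if "graft Ss = S" for Ss
  proof
    fix x assume x: "x \<in> set Ss"
    show "x \<in> A"
    proof (cases x)
      case (Some u)
      then have "S = Some u \<or> (\<exists>ts. S = Some (Nd ts) \<and> u \<in> set ts)"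
        using graft_Some_mem[OF that] x by simp
      then show ?thesis using Some by (auto simp: A_def)
    qed (simp add: A_def)
  qed
  ultimately show ?thesis
    by (intro finite_subset[OF _ finite_lists_length_eq[of A m]]) auto
qed

section \<open>The Leibniz rule\<close>

definition graft_weight :: "'a::comm_semiring_1 series list \<Rightarrow> ptree option list \<Rightarrow> 'a" where
  "graft_weight fs Ss = (\<Prod>i<length fs. (fs ! i) (Ss ! i))"

definition valid_supported :: "'a::zero series \<Rightarrow> bool" where
  "valid_supported g \<longleftrightarrow> (\<forall>S. g S \<noteq> 0 \<longrightarrow> validP S)"

definition homogeneous :: "nat \<Rightarrow> 'a::zero series \<Rightarrow> bool" where
  "homogeneous n g \<longleftrightarrow> (\<forall>S. g S \<noteq> 0 \<longrightarrow> validP S \<and> degP S = n)"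

lemma graft_series_eq: "graft_series fs S = (\<Sum>Ss | length Ss = length fs \<and> graft Ss = S. graft_weight fs Ss)"
  by (simp add: graft_series_def graft_weight_def)

lemma graft_weight_nonzeroD: "graft_weight fs Ss \<noteq> 0 \<Longrightarrow> i < length fs \<Longrightarrow> (fs ! i) (Ss ! i) \<noteq> 0"
  unfolding graft_weight_def by (metis finite_lessThan lessThan_iff prod_zero)

lemma validP_if_graft_weight_nonzero:
  assumes "list_all valid_supported fs" "length Ss = length fs" "graft_weight fs Ss \<noteq> 0"
    and "S \<in> set Ss"
  shows "validP S"
proof -
  obtain i where "i < length fs" "S = Ss ! i" using assms(2,4) by (metis in_set_conv_nth)
  then show ?thesis using assms(1) graft_weight_nonzeroD[OF assms(3)]
    by (auto simp: list_all_length valid_supported_def)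
qed

lemma degP_le_degP_graft: "S \<in> set Ss \<Longrightarrow> degP S \<le> degP (graft Ss)"
  unfolding degP_graft by (intro member_le_sum_list) auto

text \<open>Cutting all sums down to the finite set of lists over \<open>elems_upto N\<close> lets us exchange
  summations freely.\<close>

lemma graft_series_eq_sum_lists:
  assumes "list_all valid_supported fs" and "degP S \<le> N"
  shows "graft_series fs S =
    (\<Sum>Ss | length Ss = length fs \<and> set Ss \<subseteq> elems_upto N. if graft Ss = S then graft_weight fs Ss else 0)"
proof -
  let ?B = "{Ss. length Ss = length fs \<and> set Ss \<subseteq> elems_upto N}"
  let ?L = "{Ss. length Ss = length fs \<and> graft Ss = S}"
  have "(\<Sum>Ss\<in>?B. if graft Ss = S then graft_weight fs Ss else 0) = (\<Sum>Ss\<in>?L \<inter> ?B. graft_weight fs Ss)"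
  proof -
    have "?L \<inter> ?B = {Ss \<in> ?B. graft Ss = S}" by auto
    then show ?thesis by (simp only: sum.inter_filter[OF finite_lists_elems_upto])
  qed
  also have "\<dots> = (\<Sum>Ss\<in>?L. graft_weight fs Ss)"
  proof (rule sum.mono_neutral_left[OF finite_graft_preimage])
    show "\<forall>Ss\<in>?L - ?L \<inter> ?B. graft_weight fs Ss = 0"
    proof (rule ballI, rule ccontr)
      fix Ss assume Ss: "Ss \<in> ?L - ?L \<inter> ?B" and nz: "graft_weight fs Ss \<noteq> 0"
      then have len: "length Ss = length fs" and g: "graft Ss = S" by auto
      have "x \<in> elems_upto N" if "x \<in> set Ss" for x
      proof -
        have "validP x" using validP_if_graft_weight_nonzero[OF assms(1) len nz that] .
        moreover have "degP x \<le> N" using degP_le_degP_graft[OF that] g assms(2) by simp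
        ultimately show ?thesis by (simp add: elems_upto_def)
      qed
      then have "Ss \<in> ?B" using len by blast
      then show False using Ss by blast
    qed
  qed blast
  finally show ?thesis by (simp add: graft_series_eq)
qed

lemma graft_series_eq_0: "j < length fs \<Longrightarrow> fs ! j = (\<lambda>_. 0) \<Longrightarrow> graft_series fs S = 0"
  unfolding graft_series_eq graft_weight_def by (intro sum.neutral ballI prod_zero) force+

lemma graft_series_single:
  assumes "j < k"
  shows "graft_series ((replicate k oneP)[j := h]) S = h S"
proof -
  let ?fs = "(replicate k oneP)[j := h]"
  let ?S0 = "(replicate k None)[j := S]"
  have "graft_weight ?fs Ss = 0" if "length Ss = k" "graft Ss = S" "Ss \<noteq> ?S0" for Ss
  proof (rule ccontr)
    assume nz: "graft_weight ?fs Ss \<noteq> 0"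
    have "Ss ! i = None" if "i < k" "i \<noteq> j" for i
      using graft_weight_nonzeroD[OF nz, of i] that by (auto simp: oneP_def split: if_splits)
    then have "Ss = (replicate k None)[j := Ss ! j]"
      using \<open>length Ss = k\<close> assms by (intro nth_equalityI) (auto simp: nth_list_update)
    moreover from this have "Ss ! j = S"
      using \<open>graft Ss = S\<close> graft_replicate_None_update[OF assms] by metis
    ultimately show False using \<open>Ss \<noteq> ?S0\<close> by simp
  qed
  then have "graft_series ?fs S = graft_weight ?fs ?S0"
    unfolding graft_series_eq
    by (subst sum.remove[of _ ?S0]) (auto simp: finite_graft_preimage graft_replicate_None_update assms intro!: sum.neutral)
  also have "\<dots> = (?fs ! j) (?S0 ! j) * (\<Prod>i\<in>{..<k} - {j}. (?fs ! i) (?S0 ! i))"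
    unfolding graft_weight_def using assms by (simp add: prod.remove)
  also have "(\<Prod>i\<in>{..<k} - {j}. (?fs ! i) (?S0 ! i)) = 1"
    by (intro prod.neutral) (auto simp: oneP_def)
  finally show ?thesis using assms by simp
qed

lemma graft_series_replicate_oneP: "0 < k \<Longrightarrow> graft_series (replicate k oneP) S = oneP S"
  using graft_series_single[of 0 k oneP S] by (cases k) simp_all

lemma homogeneous_graft_series:
  assumes "length ds = length fs" and "\<And>i. i < length fs \<Longrightarrow> homogeneous (ds ! i) (fs ! i)"
  shows "homogeneous (sum_list ds) (graft_series fs)"
  unfolding homogeneous_def
proof (intro allI impI)
  fix S assume "graft_series fs S \<noteq> 0"
  then obtain Ss where Ss: "length Ss = length fs" "graft Ss = S" and nz: "graft_weight fs Ss \<noteq> 0"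
    unfolding graft_series_eq using sum.not_neutral_contains_not_neutral by blast
  have "validP (Ss ! i) \<and> degP (Ss ! i) = ds ! i" if "i < length fs" for i
    using assms(2)[OF that] graft_weight_nonzeroD[OF nz that] by (simp add: homogeneous_def)
  then have "\<forall>x\<in>set Ss. validP x" and "map degP Ss = ds"
    using Ss assms(1) by (auto simp: in_set_conv_nth intro: nth_equalityI)
  then show "validP S \<and> degP S = sum_list ds"
    using Ss validP_graft[of Ss] degP_graft[of Ss] by simp
qed

lemma ddx_eq_sum_elems_upto:
  assumes "degP S + 1 \<le> N"
  shows "ddx g S = (\<Sum>y\<in>elems_upto N. g y * of_nat (count_list (del_leafP y) S))"
proof -
  have "ddx g S = (\<Sum>y\<in>Some ` {t. reduced t \<and> nleaves t = degP S + 1}. g y * of_nat (count_list (del_leafP y) S))"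
    unfolding ddx_def by (simp add: sum.reindex)
  also have "\<dots> = (\<Sum>y\<in>elems_upto N. g y * of_nat (count_list (del_leafP y) S))"
  proof (rule sum.mono_neutral_left[OF finite_elems_upto])
    show "Some ` {t. reduced t \<and> nleaves t = degP S + 1} \<subseteq> elems_upto N"
      using assms by (auto simp: elems_upto_def validP_def degP_def)
    show "\<forall>y\<in>elems_upto N - Some ` {t. reduced t \<and> nleaves t = degP S + 1}.
        g y * of_nat (count_list (del_leafP y) S) = 0"
    proof
      fix y assume "y \<in> elems_upto N - Some ` {t. reduced t \<and> nleaves t = degP S + 1}"
      then have "degP y \<noteq> degP S + 1"
        by (cases y) (auto simp: elems_upto_def validP_def degP_def)
      then show "g y * of_nat (count_list (del_leafP y) S) = 0" by (simp add: count_del_leafP_eq_0)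
    qed
  qed
  finally show ?thesis .
qed

lemma valid_supported_ddx: "valid_supported (ddx g)"
  unfolding valid_supported_def
proof (intro allI impI)
  fix S assume "ddx g S \<noteq> 0"
  then obtain t where t: "t \<in> {t. reduced t \<and> nleaves t = degP S + 1}"
    and nz: "g (Some t) * of_nat (count_list (del_leaf t) S) \<noteq> 0"
    unfolding ddx_def by (rule sum.not_neutral_contains_not_neutral)
  have "S \<in> set (del_leaf t)"
  proof (rule ccontr)
    assume "S \<notin> set (del_leaf t)"
    then have "count_list (del_leaf t) S = 0" by (simp add: count_list_0_iff)
    with nz show False by simp
  qed
  then show "validP S" using t validP_del_leaf by blast
qed

lemma ddx_mult_right: "ddx (\<lambda>S. g S * c) S' = ddx g S' * c"
  unfolding ddx_def sum_distrib_right by (rule sum.cong) (auto simp: ac_simps)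

lemma ddx_sum: "ddx (\<lambda>S. \<Sum>i\<in>I. G i S) S' = (\<Sum>i\<in>I. ddx (G i) S')"
  unfolding ddx_def sum_distrib_right by (rule sum.swap)

lemma ddx_oneP: "ddx oneP = (\<lambda>_. 0)"
  by (simp add: ddx_def oneP_def fun_eq_iff)

lemma ddx_xP: "ddx xP = oneP"
proof
  fix S
  let ?A = "{t. reduced t \<and> nleaves t = degP S + 1}"
  have "finite ?A" by (rule finite_subset[OF _ finite_reduced_upto]) auto
  have "ddx xP S = (\<Sum>t\<in>?A. if t = Lf then of_nat (count_list [None] S) else 0)"
    unfolding ddx_def by (rule sum.cong) (auto simp: xP_def)
  also have "\<dots> = (if Lf \<in> ?A then of_nat (count_list [None] S) else 0)"
    using \<open>finite ?A\<close> by (rule sum.delta)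
  also have "\<dots> = oneP S" by (cases S) (auto simp: oneP_def degP_def)
  finally show "ddx xP S = oneP S" .
qed

lemma graft_weight_update:
  assumes "j < length fs"
  shows "graft_weight (fs[j := g]) Ss = g (Ss ! j) * graft_weight (fs[j := (\<lambda>_. 1)]) Ss"
proof -
  have remove: "graft_weight (fs[j := h]) Ss =
      h (Ss ! j) * (\<Prod>i\<in>{..<length fs} - {j}. (fs ! i) (Ss ! i))" for h
  proof -
    have "graft_weight (fs[j := h]) Ss =
        h (Ss ! j) * (\<Prod>i\<in>{..<length fs} - {j}. (fs[j := h] ! i) (Ss ! i))"
      unfolding graft_weight_def length_list_update using assms by (subst prod.remove[of _ j]) auto
    also have "(\<Prod>i\<in>{..<length fs} - {j}. (fs[j := h] ! i) (Ss ! i)) =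
        (\<Prod>i\<in>{..<length fs} - {j}. (fs ! i) (Ss ! i))"
      by (intro prod.cong) auto
    finally show ?thesis .
  qed
  show ?thesis using remove[of g] remove[of "\<lambda>_. 1"] by simp
qed

lemma graft_weight_update_one_list_update:
  "graft_weight (fs[j := (\<lambda>_. 1)]) (Ss[j := x]) = graft_weight (fs[j := (\<lambda>_. 1)]) Ss"
  unfolding graft_weight_def
proof (rule prod.cong[OF refl])
  fix i assume "i \<in> {..<length (fs[j := (\<lambda>_. 1)])}"
  then show "(fs[j := (\<lambda>_. 1)] ! i) (Ss[j := x] ! i) = (fs[j := (\<lambda>_. 1)] ! i) (Ss ! i)"
    by (cases "i = j") simp_all
qed

text \<open>The \<open>j\<close>-th Leibniz term as a double sum over tuples \<open>Ss\<close> and elements \<open>y\<close> whose leaf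
  deletion produces \<open>Ss ! j\<close>; the two sides are matched by exchanging \<open>y\<close> with \<open>Ss ! j\<close>.\<close>

lemma ddx_graft_series_component:
  fixes fs :: "'a::comm_semiring_1 series list"
  assumes valid: "list_all valid_supported fs" and j: "j < length fs"
  shows "(\<Sum>Ss | length Ss = length fs \<and> set Ss \<subseteq> elems_upto (degP S' + 1).
            graft_weight fs Ss * of_nat (count_list (map (\<lambda>r. graft (Ss[j := r])) (del_leafP (Ss ! j))) S'))
         = graft_series (fs[j := ddx (fs ! j)]) S'"
proof -
  define W where "W = elems_upto (degP S' + 1)"
  define B where "B = {Ss. length Ss = length fs \<and> set Ss \<subseteq> W}"
  define P where "P = graft_weight (fs[j := (\<lambda>_. 1)])"
  define c where "c y x = (of_nat (count_list (del_leafP y) x) :: 'a)" for y x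
  define H where "H Ss y = (if graft Ss = S' then P Ss * ((fs ! j) y * c y (Ss ! j)) else 0)" for Ss y
  have "(\<Sum>Ss\<in>B. graft_weight fs Ss *
          of_nat (count_list (map (\<lambda>r. graft (Ss[j := r])) (del_leafP (Ss ! j))) S'))
      = (\<Sum>Ss\<in>B. \<Sum>x\<in>W. H (Ss[j := x]) (Ss ! j))"
  proof (rule sum.cong[OF refl])
    fix Ss assume "Ss \<in> B"
    then have len: "length Ss = length fs" and "Ss ! j \<in> W" using j by (auto simp: B_def)
    then have "set (del_leafP (Ss ! j)) \<subseteq> W" unfolding W_def by (intro del_leafP_elems_upto)
    then have "of_nat (count_list (map (\<lambda>r. graft (Ss[j := r])) (del_leafP (Ss ! j))) S')
        = (\<Sum>x\<in>W. c (Ss ! j) x * (if graft (Ss[j := x]) = S' then 1 else 0))"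
      unfolding c_def W_def by (rule of_nat_count_list_map[OF finite_elems_upto])
    moreover have "H (Ss[j := x]) (Ss ! j) =
        graft_weight fs Ss * (c (Ss ! j) x * (if graft (Ss[j := x]) = S' then 1 else 0))" for x
      using graft_weight_update[OF j, of "fs ! j" Ss] j len
      by (simp add: H_def P_def graft_weight_update_one_list_update mult_ac)
    ultimately show "graft_weight fs Ss *
          of_nat (count_list (map (\<lambda>r. graft (Ss[j := r])) (del_leafP (Ss ! j))) S')
        = (\<Sum>x\<in>W. H (Ss[j := x]) (Ss ! j))"
      by (simp add: sum_distrib_left)
  qed
  also have "\<dots> = (\<Sum>Ss\<in>B. \<Sum>y\<in>W. H Ss y)"
    using sum_lists_update_swap[OF j, where W = W and H = H] by (simp add: B_def sum.cartesian_product)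
  also have "\<dots> = (\<Sum>Ss\<in>B. if graft Ss = S' then graft_weight (fs[j := ddx (fs ! j)]) Ss else 0)"
  proof (rule sum.cong[OF refl])
    fix Ss assume Ss: "Ss \<in> B"
    show "(\<Sum>y\<in>W. H Ss y) = (if graft Ss = S' then graft_weight (fs[j := ddx (fs ! j)]) Ss else 0)"
    proof (cases "graft Ss = S'")
      case True
      have "Ss ! j \<in> set Ss" using Ss j by (simp add: B_def)
      then have "degP (Ss ! j) \<le> degP S'" using degP_le_degP_graft True by blast
      then have "ddx (fs ! j) (Ss ! j) = (\<Sum>y\<in>W. (fs ! j) y * c y (Ss ! j))"
        unfolding W_def c_def by (intro ddx_eq_sum_elems_upto) simp
      then show ?thesis
        using True graft_weight_update[OF j, of "ddx (fs ! j)" Ss]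
        by (simp add: H_def P_def sum_distrib_left mult_ac)
    qed (simp add: H_def)
  qed
  also have "\<dots> = graft_series (fs[j := ddx (fs ! j)]) S'"
  proof -
    have "list_all valid_supported (fs[j := ddx (fs ! j)])"
      using valid by (intro list_all_update valid_supported_ddx)
    then show ?thesis
      using graft_series_eq_sum_lists[of "fs[j := ddx (fs ! j)]" S' "degP S' + 1"]
      by (simp add: B_def W_def)
  qed
  finally show ?thesis unfolding B_def W_def .
qed

lemma ddx_graft_series_eq_sum_lists:
  fixes fs :: "'a::comm_semiring_1 series list"
  assumes valid: "list_all valid_supported fs"
  shows "ddx (graft_series fs) S' =
    (\<Sum>Ss | length Ss = length fs \<and> set Ss \<subseteq> elems_upto (degP S' + 1).
       graft_weight fs Ss * of_nat (count_list (del_leafP (graft Ss)) S'))"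
proof -
  define W where "W = elems_upto (degP S' + 1)"
  define B where "B = {Ss. length Ss = length fs \<and> set Ss \<subseteq> W}"
  define c where "c y = (of_nat (count_list (del_leafP y) S') :: 'a)" for y
  have "ddx (graft_series fs) S' = (\<Sum>y\<in>W. graft_series fs y * c y)"
    unfolding W_def c_def by (rule ddx_eq_sum_elems_upto) simp
  also have "\<dots> = (\<Sum>y\<in>W. \<Sum>Ss\<in>B. if graft Ss = y then graft_weight fs Ss * c y else 0)"
  proof (rule sum.cong[OF refl])
    fix y assume "y \<in> W"
    then have gs: "graft_series fs y = (\<Sum>Ss\<in>B. if graft Ss = y then graft_weight fs Ss else 0)"
      unfolding B_def W_def by (intro graft_series_eq_sum_lists[OF valid]) (simp add: elems_upto_def)
    show "graft_series fs y * c y = (\<Sum>Ss\<in>B. if graft Ss = y then graft_weight fs Ss * c y else 0)"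
      unfolding gs sum_distrib_right by (intro sum.cong) simp_all
  qed
  also have "\<dots> = (\<Sum>Ss\<in>B. \<Sum>y\<in>W. if graft Ss = y then graft_weight fs Ss * c y else 0)"
    by (rule sum.swap)
  also have "\<dots> = (\<Sum>Ss\<in>B. graft_weight fs Ss * c (graft Ss))"
  proof (rule sum.cong[OF refl])
    fix Ss assume Ss: "Ss \<in> B"
    show "(\<Sum>y\<in>W. if graft Ss = y then graft_weight fs Ss * c y else 0) = graft_weight fs Ss * c (graft Ss)"
    proof (cases "graft Ss \<in> W \<or> graft_weight fs Ss = 0")
      case False
      then have "validP (graft Ss)"
        using Ss validP_if_graft_weight_nonzero[OF valid] by (intro validP_graft) (auto simp: B_def)
      then have "degP (graft Ss) \<noteq> degP S' + 1" using False by (auto simp: W_def elems_upto_def)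
      then have "c (graft Ss) = 0" by (simp add: c_def count_del_leafP_eq_0)
      then show ?thesis using False finite_elems_upto by (simp add: sum.delta W_def)
    qed (auto simp: sum.delta W_def finite_elems_upto)
  qed
  finally show ?thesis by (simp add: B_def W_def c_def)
qed

theorem ddx_graft_series:
  fixes fs :: "'a::comm_semiring_1 series list"
  assumes valid: "list_all valid_supported fs"
  shows "ddx (graft_series fs) S' = (\<Sum>j<length fs. graft_series (fs[j := ddx (fs ! j)]) S')"
proof -
  let ?B = "{Ss. length Ss = length fs \<and> set Ss \<subseteq> elems_upto (degP S' + 1)}"
  let ?count = "\<lambda>Ss j. of_nat (count_list (map (\<lambda>r. graft (Ss[j := r])) (del_leafP (Ss ! j))) S')"
  have "ddx (graft_series fs) S' = (\<Sum>Ss\<in>?B. \<Sum>j<length fs. graft_weight fs Ss * ?count Ss j)"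
    unfolding ddx_graft_series_eq_sum_lists[OF valid]
    by (intro sum.cong refl) (simp add: del_leafP_graft count_list_del_leaf_forest sum_distrib_left)
  also have "\<dots> = (\<Sum>j<length fs. \<Sum>Ss\<in>?B. graft_weight fs Ss * ?count Ss j)"
    by (rule sum.swap)
  also have "\<dots> = (\<Sum>j<length fs. graft_series (fs[j := ddx (fs ! j)]) S')"
    by (intro sum.cong refl ddx_graft_series_component[OF valid]) simp
  finally show ?thesis .
qed

section \<open>Weak compositions\<close>

definition wcomps :: "nat \<Rightarrow> nat \<Rightarrow> nat list set" where
  "wcomps k n = {cs. length cs = k \<and> sum_list cs = n}"

definition wcomps_lt :: "nat \<Rightarrow> nat \<Rightarrow> nat list set" where
  "wcomps_lt k n = {cs \<in> wcomps k n. \<forall>c\<in>set cs. c < n}"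

definition wcomp_single :: "nat \<Rightarrow> nat \<Rightarrow> nat \<Rightarrow> nat list" where
  "wcomp_single k j n = (replicate k 0)[j := n]"

lemma finite_wcomps: "finite (wcomps k n)"
proof -
  have "wcomps k n \<subseteq> {cs. set cs \<subseteq> {..n} \<and> length cs = k}"
    unfolding wcomps_def using member_le_sum_list by fastforce
  then show ?thesis using finite_lists_length_eq[of "{..n}" k] finite_subset by blast
qed

lemma finite_wcomps_lt: "finite (wcomps_lt k n)"
  using finite_wcomps by (simp add: wcomps_lt_def)

lemma wcomps_0: "wcomps k 0 = {replicate k 0}"
  by (auto simp: wcomps_def sum_list_eq_0_iff intro: replicate_eqI)

lemma wcomps_lt_Suc_0: "wcomps_lt k (Suc 0) = {}"
proof (rule equals0I)
  fix cs assume "cs \<in> wcomps_lt k (Suc 0)"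
  then have "sum_list cs = 1" and "\<forall>c\<in>set cs. c = 0" by (auto simp: wcomps_lt_def wcomps_def)
  then show False by (simp add: sum_list_eq_0_iff[symmetric])
qed

lemma wcomp_single_in_wcomps: "j < k \<Longrightarrow> wcomp_single k j n \<in> wcomps k n"
  by (simp add: wcomps_def wcomp_single_def sum_list_update)

lemma wcomps_eq_single_if_not_lt:
  assumes "cs \<in> wcomps k n" and "\<not> (\<forall>c\<in>set cs. c < n)"
  obtains j where "j < k" and "cs = wcomp_single k j n"
proof -
  obtain j where j: "j < length cs" and "n \<le> cs ! j"
    using assms(2) by (auto simp: in_set_conv_nth not_less)
  moreover have "cs ! j \<le> n" using assms(1) j by (auto simp: wcomps_def intro: member_le_sum_list)
  ultimately have cj: "cs ! j = n" by simp
  have "sum_list (cs[j := 0]) = 0" using assms(1) j cj by (simp add: wcomps_def sum_list_update)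
  then have "cs ! i = 0" if "i < length cs" "i \<noteq> j" for i
    using that by (metis length_list_update nth_list_update_neq nth_mem sum_list_eq_0_iff)
  then have "cs = wcomp_single k j n"
    using assms(1) j cj by (intro nth_equalityI) (auto simp: wcomps_def wcomp_single_def nth_list_update)
  then show thesis using that j assms(1) by (simp add: wcomps_def)
qed

lemma sum_wcomps_split:
  assumes "1 \<le> n"
  shows "(\<Sum>cs\<in>wcomps k n. F cs) = (\<Sum>j<k. F (wcomp_single k j n)) + (\<Sum>cs\<in>wcomps_lt k n. F cs)"
proof -
  let ?single = "\<lambda>j. wcomp_single k j n"
  have single_nth: "?single j ! i = (if i = j then n else 0)" if "i < k" "j < k" for i j
    using that by (simp add: wcomp_single_def nth_list_update)
  have inj: "inj_on ?single {..<k}"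
  proof (rule inj_onI)
    fix a b assume "a \<in> {..<k}" "b \<in> {..<k}" "?single a = ?single b"
    then have "n = (if a = b then n else 0)" using single_nth[of a a] single_nth[of a b] by simp
    then show "a = b" using assms by (simp split: if_splits)
  qed
  have "wcomps k n \<subseteq> ?single ` {..<k} \<union> wcomps_lt k n"
  proof
    fix cs assume cs: "cs \<in> wcomps k n"
    show "cs \<in> ?single ` {..<k} \<union> wcomps_lt k n"
    proof (cases "\<forall>c\<in>set cs. c < n")
      case False
      with cs obtain j where "j < k" "cs = ?single j" by (rule wcomps_eq_single_if_not_lt)
      then show ?thesis by blast
    qed (use cs in \<open>simp add: wcomps_lt_def\<close>)
  qed
  moreover have "?single ` {..<k} \<union> wcomps_lt k n \<subseteq> wcomps k n"
    using wcomp_single_in_wcomps by (auto simp: wcomps_lt_def)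
  moreover have "?single j \<notin> wcomps_lt k n" if "j < k" for j
  proof -
    have "?single j ! j \<in> set (?single j)" using that by (simp add: wcomp_single_def set_update_memI)
    then show ?thesis using single_nth[of j j] that by (auto simp: wcomps_lt_def)
  qed
  ultimately have "wcomps k n = ?single ` {..<k} \<union> wcomps_lt k n"
    and "?single ` {..<k} \<inter> wcomps_lt k n = {}" by blast+
  then show ?thesis
    by (simp add: sum.union_disjoint finite_wcomps_lt sum.reindex[OF inj])
qed

lemma sum_wcomps_decrement:
  assumes "j < k" and "1 \<le> n"
  shows "(\<Sum>cs | cs \<in> wcomps k n \<and> cs ! j \<noteq> 0. F (cs[j := cs ! j - 1])) = (\<Sum>cs\<in>wcomps k (n - 1). F cs)"
proof (rule sum.reindex_bij_witness[where i = "\<lambda>cs. cs[j := cs ! j + 1]" and j = "\<lambda>cs. cs[j := cs ! j - 1]"])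
  fix cs assume "cs \<in> wcomps k (n - 1)"
  then show "cs[j := cs ! j + 1] \<in> {cs \<in> wcomps k n. cs ! j \<noteq> 0}"
    using assms by (simp add: wcomps_def sum_list_update)
qed (use assms in \<open>auto simp: wcomps_def sum_list_update\<close>)

section \<open>Existence and uniqueness of the planar exponential\<close>

lemma graft_series_wcomp_single:
  assumes "g 0 = oneP" and "j < k"
  shows "graft_series (map g (wcomp_single k j n)) S = g n S"
proof -
  have "map g (wcomp_single k j n) = (replicate k oneP)[j := g n]"
    using assms by (simp add: wcomp_single_def map_update)
  then show ?thesis using graft_series_single[OF assms(2)] by simp
qed

lemma sum_wcomps_graft_series_split:
  assumes "g 0 = oneP" and "1 \<le> n"
  shows "(\<Sum>cs\<in>wcomps k n. graft_series (map g cs) S) =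
    of_nat k * g n S + (\<Sum>cs\<in>wcomps_lt k n. graft_series (map g cs) S)"
proof -
  have "(\<Sum>j<k. graft_series (map g (wcomp_single k j n)) S) = (\<Sum>j<k. g n S)"
    by (rule sum.cong) (simp_all add: graft_series_wcomp_single[of g, OF assms(1)])
  then show ?thesis
    using sum_wcomps_split[OF assms(2), where F = "\<lambda>cs. graft_series (map g cs) S"] by simp
qed

lemma planar_Exp_eqn:
  assumes "is_planar_Exp k f"
  shows "(\<Sum>cs\<in>wcomps k n. graft_series (map f cs) S) = of_nat k ^ n * f n S"
proof -
  have "(\<lambda>S. of_nat k ^ n * f n S) =
      (\<lambda>S. \<Sum>cs\<in>{cs. length cs = k \<and> sum_list cs = n}. graft_series (map f cs) S)"
    using assms by (simp add: is_planar_Exp_def)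
  from fun_cong[OF this, of S] show ?thesis by (simp add: wcomps_def)
qed

lemma sum_wcomps_lt_planar_Exp:
  assumes "is_planar_Exp k f" and "1 \<le> n"
  shows "(\<Sum>cs\<in>wcomps_lt k n. graft_series (map f cs) S) = (of_nat k ^ n - of_nat k) * f n S"
proof -
  have "f 0 = oneP" using assms(1) by (simp add: is_planar_Exp_def)
  then have "of_nat k * f n S + (\<Sum>cs\<in>wcomps_lt k n. graft_series (map f cs) S) = of_nat k ^ n * f n S"
    using sum_wcomps_graft_series_split[of f, OF _ assms(2)] planar_Exp_eqn[OF assms(1)] by metis
  then have "(\<Sum>cs\<in>wcomps_lt k n. graft_series (map f cs) S) = of_nat k ^ n * f n S - of_nat k * f n S"
    by (metis add_diff_cancel_left')
  then show ?thesis by (simp add: left_diff_distrib)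
qed

lemma of_nat_power_minus_self_nonzero:
  assumes "2 \<le> k" and "2 \<le> n"
  shows "(of_nat k ^ n - of_nat k :: 'a::ring_char_0) \<noteq> 0"
proof -
  have "k < k ^ 2" using assms(1) by (simp add: power2_eq_square)
  also have "k ^ 2 \<le> k ^ n" using assms by (intro power_increasing) auto
  finally show ?thesis by (metis of_nat_eq_iff of_nat_power right_minus_eq less_irrefl)
qed

lemma planar_Exp_unique:
  assumes "2 \<le> k" and f: "is_planar_Exp k (f :: nat \<Rightarrow> 'a::field_char_0 series)"
    and g: "is_planar_Exp k g"
  shows "f = g"
proof
  fix n show "f n = g n"
  proof (induction n rule: less_induct)
    case (less n)
    consider "n = 0" | "n = 1" | "2 \<le> n" by linarith
    then show ?case
    proof cases
      case 3
      show ?thesis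
      proof
        fix S
        have "(\<Sum>cs\<in>wcomps_lt k n. graft_series (map f cs) S) = (\<Sum>cs\<in>wcomps_lt k n. graft_series (map g cs) S)"
          using less.IH by (intro sum.cong refl arg_cong[where f = "\<lambda>fs. graft_series fs S"] map_cong)
            (auto simp: wcomps_lt_def)
        then have "(of_nat k ^ n - of_nat k) * f n S = (of_nat k ^ n - of_nat k) * g n S"
          using sum_wcomps_lt_planar_Exp[OF f] sum_wcomps_lt_planar_Exp[OF g] 3 by simp
        then show "f n S = g n S" using of_nat_power_minus_self_nonzero[OF assms(1) 3] by simp
      qed
    qed (use f g in \<open>simp_all add: is_planar_Exp_def\<close>)
  qed
qed

text \<open>The functional equation, solved for \<open>f n\<close> (\<open>n \<ge> 2\<close>), is a recursion: the parts of a
  composition in \<open>wcomps_lt k n\<close> are smaller than \<open>n\<close>.\<close>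

definition planar_Exp_seq :: "nat \<Rightarrow> nat \<Rightarrow> 'a::field_char_0 series" where
  "planar_Exp_seq k = wfrec less_than (\<lambda>f n. if n = 0 then oneP else if n = 1 then xP else
     (\<lambda>S. (\<Sum>cs\<in>wcomps_lt k n. graft_series (map f cs) S) / (of_nat k ^ n - of_nat k)))"

lemma planar_Exp_seq_eq:
  "planar_Exp_seq k n = (if n = 0 then oneP else if n = 1 then xP else
     (\<lambda>S. (\<Sum>cs\<in>wcomps_lt k n. graft_series (map (planar_Exp_seq k) cs) S) / (of_nat k ^ n - of_nat k)))"
proof -
  let ?F = "\<lambda>f n. if n = 0 then oneP else if n = 1 then xP else
     (\<lambda>S. (\<Sum>cs\<in>wcomps_lt k n. graft_series (map f cs) S) / (of_nat k ^ n - (of_nat k :: 'a)))"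
  have "adm_wf less_than ?F"
    unfolding adm_wf_def
  proof (intro allI impI)
    fix f g :: "nat \<Rightarrow> 'a series" and n assume "\<forall>z. (z, n) \<in> less_than \<longrightarrow> f z = g z"
    then have maps: "map f cs = map g cs" if "cs \<in> wcomps_lt k n" for cs
      using that by (intro map_cong) (auto simp: wcomps_lt_def)
    have "(\<Sum>cs\<in>wcomps_lt k n. graft_series (map f cs) S) =
        (\<Sum>cs\<in>wcomps_lt k n. graft_series (map g cs) S)" for S
      by (intro sum.cong) (simp_all add: maps)
    then show "?F f n = ?F g n" by simp
  qed
  then show ?thesis
    unfolding planar_Exp_seq_def by (subst wfrec_fixpoint) simp_all
qed

lemma planar_Exp_seq_0: "planar_Exp_seq k 0 = oneP"
  by (subst planar_Exp_seq_eq) simp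

lemma planar_Exp_seq_1: "planar_Exp_seq k 1 = xP"
  by (subst planar_Exp_seq_eq) simp

lemma planar_Exp_seq_ge2:
  "2 \<le> n \<Longrightarrow> planar_Exp_seq k n S =
     (\<Sum>cs\<in>wcomps_lt k n. graft_series (map (planar_Exp_seq k) cs) S) / (of_nat k ^ n - of_nat k)"
  by (subst planar_Exp_seq_eq) simp

lemma homogeneous_planar_Exp_seq: "homogeneous n (planar_Exp_seq k n :: 'a::field_char_0 series)"
proof (induction n rule: less_induct)
  case (less n)
  consider "n = 0" | "n = 1" | "2 \<le> n" by linarith
  then show ?case
  proof cases
    case 3
    show ?thesis
      unfolding homogeneous_def
    proof (intro allI impI)
      fix S assume nonzero: "(planar_Exp_seq k n S :: 'a) \<noteq> 0"
      have "(\<Sum>cs\<in>wcomps_lt k n. graft_series (map (planar_Exp_seq k :: nat \<Rightarrow> 'a series) cs) S) \<noteq> 0"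
      proof
        assume "(\<Sum>cs\<in>wcomps_lt k n. graft_series (map (planar_Exp_seq k :: nat \<Rightarrow> 'a series) cs) S) = 0"
        then have "(planar_Exp_seq k n S :: 'a) = 0" using 3 by (simp add: planar_Exp_seq_ge2)
        with nonzero show False by contradiction
      qed
      then obtain cs where cs: "cs \<in> wcomps_lt k n"
        and nz: "graft_series (map (planar_Exp_seq k :: nat \<Rightarrow> 'a series) cs) S \<noteq> 0"
        by (rule sum.not_neutral_contains_not_neutral)
      have "homogeneous (sum_list cs) (graft_series (map (planar_Exp_seq k :: nat \<Rightarrow> 'a series) cs))"
        using cs less.IH by (intro homogeneous_graft_series) (auto simp: wcomps_lt_def)
      then show "validP S \<and> degP S = n" using nz cs by (simp add: homogeneous_def wcomps_lt_def wcomps_def)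
    qed
  qed (use planar_Exp_seq_0[where 'a = 'a] planar_Exp_seq_1[where 'a = 'a] in
      \<open>simp_all add: homogeneous_def oneP_def xP_def validP_def degP_def\<close>)
qed

lemma sum_wcomps_planar_Exp_seq:
  assumes "2 \<le> k"
  shows "(\<Sum>cs\<in>wcomps k n. graft_series (map (planar_Exp_seq k) cs) S) =
    of_nat k ^ n * (planar_Exp_seq k n S :: 'a::field_char_0)"
proof -
  let ?f = "planar_Exp_seq k :: nat \<Rightarrow> 'a series"
  have f0: "?f 0 = oneP" by (rule planar_Exp_seq_0)
  consider "n = 0" | "n = 1" | "2 \<le> n" by linarith
  then show ?thesis
  proof cases
    case 1
    then show ?thesis using assms f0 by (simp add: wcomps_0 graft_series_replicate_oneP)
  next
    case 2
    have "(\<Sum>cs\<in>wcomps k 1. graft_series (map ?f cs) S) = of_nat k * ?f 1 S"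
      using sum_wcomps_graft_series_split[where g = ?f and n = 1 and k = k and S = S, OF f0]
      by (simp add: wcomps_lt_Suc_0)
    then show ?thesis using 2 by simp
  next
    case 3
    have lt: "(\<Sum>cs\<in>wcomps_lt k n. graft_series (map ?f cs) S) = (of_nat k ^ n - of_nat k) * ?f n S"
      using planar_Exp_seq_ge2[OF 3, of k S, where 'a = 'a]
        of_nat_power_minus_self_nonzero[OF assms 3, where 'a = 'a]
      by (simp add: field_simps)
    have "(\<Sum>cs\<in>wcomps k n. graft_series (map ?f cs) S) =
        of_nat k * ?f n S + (\<Sum>cs\<in>wcomps_lt k n. graft_series (map ?f cs) S)"
      by (rule sum_wcomps_graft_series_split[where g = ?f, OF f0]) (use 3 in simp)
    also have "\<dots> = of_nat k ^ n * ?f n S" unfolding lt by (simp add: algebra_simps)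
    finally show ?thesis .
  qed
qed

lemma is_planar_Exp_planar_Exp_seq:
  assumes "2 \<le> k"
  shows "is_planar_Exp k (planar_Exp_seq k :: nat \<Rightarrow> 'a::field_char_0 series)"
  unfolding is_planar_Exp_def
proof (intro conjI allI impI)
  let ?f = "planar_Exp_seq k :: nat \<Rightarrow> 'a series"
  show "?f 0 = oneP" by (rule planar_Exp_seq_0)
  show "?f 1 = xP" by (rule planar_Exp_seq_1)
  show "validP S" "degP S = n" if "?f n S \<noteq> 0" for n S
    using homogeneous_planar_Exp_seq[of n k] that unfolding homogeneous_def by blast+
  show "(\<lambda>S. of_nat k ^ n * ?f n S) =
      (\<lambda>S. \<Sum>cs\<in>{cs. length cs = k \<and> sum_list cs = n}. graft_series (map ?f cs) S)" for n
    using sum_wcomps_planar_Exp_seq[OF assms, where n = n and 'a = 'a] by (simp add: wcomps_def fun_eq_iff)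
qed

lemma is_planar_Exp_planar_Exp_comp:
  assumes "2 \<le> k"
  shows "is_planar_Exp k (planar_Exp_comp k :: nat \<Rightarrow> 'a::field_char_0 series)"
  unfolding planar_Exp_comp_def
  by (rule theI[of _ "planar_Exp_seq k"])
    (use assms is_planar_Exp_planar_Exp_seq planar_Exp_unique in blast)+

section \<open>The derivative of the planar exponential\<close>

definition graft_series_lower :: "(nat \<Rightarrow> 'a::comm_semiring_1 series) \<Rightarrow> nat list \<Rightarrow> nat \<Rightarrow> 'a series" where
  "graft_series_lower f cs j =
     (if cs ! j = 0 then (\<lambda>_. 0) else graft_series (map f (cs[j := cs ! j - 1])))"

lemma sum_wcomps_graft_series_lower:
  assumes "is_planar_Exp k f" and "1 \<le> n"
  shows "(\<Sum>cs\<in>wcomps k n. \<Sum>j<k. graft_series_lower f cs j S) = of_nat k ^ n * f (n - 1) S"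
proof -
  have "(\<Sum>cs\<in>wcomps k n. \<Sum>j<k. graft_series_lower f cs j S) =
      (\<Sum>j<k. \<Sum>cs\<in>wcomps k n. graft_series_lower f cs j S)"
    by (rule sum.swap)
  also have "\<dots> = (\<Sum>j<k. \<Sum>cs\<in>wcomps k (n - 1). graft_series (map f cs) S)"
  proof (rule sum.cong[OF refl])
    fix j assume "j \<in> {..<k}"
    then have j: "j < k" by simp
    have "(\<Sum>cs\<in>wcomps k n. graft_series_lower f cs j S) =
        (\<Sum>cs | cs \<in> wcomps k n \<and> cs ! j \<noteq> 0. graft_series (map f (cs[j := cs ! j - 1])) S)"
      by (rule sum.mono_neutral_cong_right) (auto simp: finite_wcomps graft_series_lower_def)
    also have "\<dots> = (\<Sum>cs\<in>wcomps k (n - 1). graft_series (map f cs) S)"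
      using j assms(2) by (rule sum_wcomps_decrement)
    finally show "(\<Sum>cs\<in>wcomps k n. graft_series_lower f cs j S) =
        (\<Sum>cs\<in>wcomps k (n - 1). graft_series (map f cs) S)" .
  qed
  also have "\<dots> = of_nat k * (of_nat k ^ (n - 1) * f (n - 1) S)"
    by (simp add: planar_Exp_eqn[OF assms(1)])
  also have "\<dots> = of_nat k ^ n * f (n - 1) S"
    using assms(2) by (cases n) (simp_all add: mult.assoc)
  finally show ?thesis .
qed

lemma sum_wcomps_lt_graft_series_lower:
  assumes "is_planar_Exp k f" and "1 \<le> n"
  shows "(\<Sum>cs\<in>wcomps_lt k n. \<Sum>j<k. graft_series_lower f cs j S) = (of_nat k ^ n - of_nat k) * f (n - 1) S"
proof -
  have f0: "f 0 = oneP" using assms(1) by (simp add: is_planar_Exp_def)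
  have "(\<Sum>j<k. graft_series_lower f (wcomp_single k j0 n) j S) = f (n - 1) S" if j0: "j0 < k" for j0
  proof -
    have "graft_series_lower f (wcomp_single k j0 n) j S = (if j = j0 then f (n - 1) S else 0)"
      if "j < k" for j
    proof -
      have "(wcomp_single k j0 n)[j0 := n - 1] = wcomp_single k j0 (n - 1)"
        by (simp add: wcomp_single_def)
      then show ?thesis
        using that j0 assms(2) graft_series_wcomp_single[of f, OF f0 j0, of "n - 1" S]
        by (auto simp: graft_series_lower_def wcomp_single_def nth_list_update)
    qed
    then have "(\<Sum>j<k. graft_series_lower f (wcomp_single k j0 n) j S) =
        (\<Sum>j<k. if j = j0 then f (n - 1) S else 0)"
      by (intro sum.cong) simp_all
    then show ?thesis using j0 by simp
  qed
  then have "of_nat k ^ n * f (n - 1) S =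
      of_nat k * f (n - 1) S + (\<Sum>cs\<in>wcomps_lt k n. \<Sum>j<k. graft_series_lower f cs j S)"
    using sum_wcomps_graft_series_lower[OF assms, of S]
      sum_wcomps_split[OF assms(2), where F = "\<lambda>cs. \<Sum>j<k. graft_series_lower f cs j S"]
    by simp
  then show ?thesis by (simp add: algebra_simps)
qed

lemma ddx_graft_series_wcomps_lt:
  assumes f: "is_planar_Exp k f" and cs: "cs \<in> wcomps_lt k n"
    and IH: "\<And>m. m < n \<Longrightarrow> 1 \<le> m \<Longrightarrow> ddx (f m) = f (m - 1)"
  shows "ddx (graft_series (map f cs)) S = (\<Sum>j<k. graft_series_lower f cs j S)"
proof -
  have len: "length cs = k" using cs by (simp add: wcomps_lt_def wcomps_def)
  have "list_all valid_supported (map f cs)"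
    using f by (auto simp: list_all_iff is_planar_Exp_def valid_supported_def)
  then have "ddx (graft_series (map f cs)) S =
      (\<Sum>j<length cs. graft_series ((map f cs)[j := ddx (f (cs ! j))]) S)"
    by (simp add: ddx_graft_series)
  also have "\<dots> = (\<Sum>j<k. graft_series_lower f cs j S)"
  proof (rule sum.cong)
    fix j assume "j \<in> {..<k}"
    then have j: "j < length cs" using len by simp
    show "graft_series ((map f cs)[j := ddx (f (cs ! j))]) S = graft_series_lower f cs j S"
    proof (cases "cs ! j = 0")
      case True
      then have "ddx (f (cs ! j)) = (\<lambda>_. 0)" using f by (simp add: is_planar_Exp_def ddx_oneP)
      then show ?thesis using True j by (simp add: graft_series_lower_def graft_series_eq_0)
    next
      case False
      have "cs ! j < n" using cs j by (simp add: wcomps_lt_def)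
      then have "ddx (f (cs ! j)) = f (cs ! j - 1)" using False IH by simp
      then show ?thesis using False by (simp add: graft_series_lower_def map_update)
    qed
  qed (simp add: len)
  finally show ?thesis .
qed

theorem ddx_planar_Exp_component:
  assumes k: "2 \<le> k" and f: "is_planar_Exp k (f :: nat \<Rightarrow> 'a::field_char_0 series)"
    and "1 \<le> n"
  shows "ddx (f n) = f (n - 1)"
  using \<open>1 \<le> n\<close>
proof (induction n rule: less_induct)
  case (less n)
  consider "n = 1" | "2 \<le> n" using less.prems by linarith
  then show ?case
  proof cases
    case 1
    then show ?thesis using f by (simp add: is_planar_Exp_def ddx_xP)
  next
    case 2
    define K where "K = (of_nat k ^ n - of_nat k :: 'a)"
    have "K \<noteq> 0" unfolding K_def using k 2 by (rule of_nat_power_minus_self_nonzero)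
    show ?thesis
    proof
      fix S
      have "(\<lambda>S. f n S * K) = (\<lambda>S. \<Sum>cs\<in>wcomps_lt k n. graft_series (map f cs) S)"
        using sum_wcomps_lt_planar_Exp[OF f less.prems] by (simp add: K_def mult.commute)
      then have "ddx (f n) S * K = ddx (\<lambda>S. \<Sum>cs\<in>wcomps_lt k n. graft_series (map f cs) S) S"
        by (metis ddx_mult_right)
      also have "\<dots> = (\<Sum>cs\<in>wcomps_lt k n. ddx (graft_series (map f cs)) S)"
        by (rule ddx_sum)
      also have "\<dots> = (\<Sum>cs\<in>wcomps_lt k n. \<Sum>j<k. graft_series_lower f cs j S)"
        using ddx_graft_series_wcomps_lt[OF f _ less.IH] by simp
      also have "\<dots> = K * f (n - 1) S"
        unfolding K_def using f less.prems by (rule sum_wcomps_lt_graft_series_lower)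
      finally show "ddx (f n) S = f (n - 1) S" using \<open>K \<noteq> 0\<close> by (simp add: mult.commute)
    qed
  qed
qed

lemma ddx_cong:
  "(\<And>t. reduced t \<Longrightarrow> nleaves t = degP S + 1 \<Longrightarrow> g (Some t) = h (Some t)) \<Longrightarrow> ddx g S = ddx h S"
  unfolding ddx_def by (intro sum.cong) auto

theorem proposition6p2:
  fixes k :: nat
  assumes "2 \<le> k"
  shows "ddx (planar_Exp k :: 'a::field_char_0 series) = planar_Exp k
    \<and> (\<forall>n\<ge>1. ddx (planar_Exp_comp k n :: 'a series) = planar_Exp_comp k (n - 1))"
proof -
  have comp: "\<forall>n\<ge>1. ddx (planar_Exp_comp k n :: 'a series) = planar_Exp_comp k (n - 1)"
    using ddx_planar_Exp_component[OF assms is_planar_Exp_planar_Exp_comp[OF assms]] by blast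
  have "ddx (planar_Exp k :: 'a series) S = planar_Exp k S" for S
  proof -
    have "ddx (planar_Exp k :: 'a series) S = ddx (planar_Exp_comp k (degP S + 1)) S"
      by (rule ddx_cong) (simp add: planar_Exp_def degP_def)
    also have "\<dots> = planar_Exp k S" using comp by (simp add: planar_Exp_def)
    finally show ?thesis .
  qed
  with comp show ?thesis by blast
qed

end
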